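(* For every constant $c>0$ there is a constant $K$, depending only on $c$, such that the following holds. Let $G$ be a finite, undirected, connected, unweighted, loop-free graph without multi-edges, let $r\in V(G)$, and let $C_1,\dots,C_l$ be the connected components of the graph obtained from $G$ by deleting $r$. For $i\in\{1,\dots,l\}$ let $V_i=\sum_{j\in\{1,\dots,l\}\setminus\{i\}}|V(C_j)|$. If $V_i\ge c\,|V(G)|$ for all $i\in\{1,\dots,l\}$ (i.e., $V_i=\Theta(|V(G)|)$ for all $i$), then for every $v\in V(G)$, $$\delta_{v\bullet}(r)\le K\cdot\overline{\delta(r)},\qquad\text{where }\ \overline{\delta(r)}=\frac{1}{|V(G)|}\sum_{u\in V(G)}\delta_{u\bullet}(r);$$ that is, the quantity $\mu(r)$ (a value with $\delta_{v\bullet}(r)\le\mu(r)\,\overline{\delta(r)}$ for all $v$) can be taken to be a constant.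
   Context: For $s,t\in V(G)$, $\sigma_{st}$ is the number of shortest paths between $s$ and $t$, and $\sigma_{st}(v)$ is the number of those that pass through $v$ as an internal vertex. The dependency score of $s$ on $v$ is $\delta_{s\bullet}(v)=\sum_{t\in V(G)\setminus\{v,s\}}\frac{\sigma_{st}(v)}{\sigma_{st}}$ for $s\neq v$, and $\delta_{v\bullet}(v)=0$. The paper's statement says "if for all $i$, $V_i=\Theta(|V(G)|)$, then $\mu(r)$ is a constant"; the claim is the uniform (constant-bounded) reading of this asymptotic statement. *)

theory Defs
  imports Complex_Main
begin

definition simple_graph :: "'a set \<Rightarrow> ('a \<Rightarrow> 'a \<Rightarrow> bool) \<Rightarrow> bool" where
  "simple_graph V E \<longleftrightarrow> finite V \<and> (\<forall>x y. E x y \<longrightarrow> x \<in> V \<and> y \<in> V)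
     \<and> (\<forall>x y. E x y \<longrightarrow> E y x) \<and> (\<forall>x. \<not> E x x)"

definition walk_in :: "'a set \<Rightarrow> ('a \<Rightarrow> 'a \<Rightarrow> bool) \<Rightarrow> 'a list \<Rightarrow> 'a \<Rightarrow> 'a \<Rightarrow> bool" where
  "walk_in W E xs s t \<longleftrightarrow> xs \<noteq> [] \<and> hd xs = s \<and> last xs = t \<and> successively E xs \<and> set xs \<subseteq> W"

definition reach :: "'a set \<Rightarrow> ('a \<Rightarrow> 'a \<Rightarrow> bool) \<Rightarrow> 'a \<Rightarrow> 'a \<Rightarrow> bool" where
  "reach W E s t \<longleftrightarrow> (\<exists>xs. walk_in W E xs s t)"

definition graph_connected :: "'a set \<Rightarrow> ('a \<Rightarrow> 'a \<Rightarrow> bool) \<Rightarrow> bool" where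
  "graph_connected V E \<longleftrightarrow> (\<forall>s\<in>V. \<forall>t\<in>V. reach V E s t)"

definition comps_minus :: "'a set \<Rightarrow> ('a \<Rightarrow> 'a \<Rightarrow> bool) \<Rightarrow> 'a \<Rightarrow> 'a set set" where
  "comps_minus V E r = (\<lambda>s. {t \<in> V - {r}. reach (V - {r}) E s t}) ` (V - {r})"

definition shortest_paths :: "'a set \<Rightarrow> ('a \<Rightarrow> 'a \<Rightarrow> bool) \<Rightarrow> 'a \<Rightarrow> 'a \<Rightarrow> 'a list set" where
  "shortest_paths V E s t = {xs. walk_in V E xs s t \<and>
      (\<forall>ys. walk_in V E ys s t \<longrightarrow> length xs \<le> length ys)}"

definition sigma :: "'a set \<Rightarrow> ('a \<Rightarrow> 'a \<Rightarrow> bool) \<Rightarrow> 'a \<Rightarrow> 'a \<Rightarrow> nat" where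
  "sigma V E s t = card (shortest_paths V E s t)"

definition sigma_via :: "'a set \<Rightarrow> ('a \<Rightarrow> 'a \<Rightarrow> bool) \<Rightarrow> 'a \<Rightarrow> 'a \<Rightarrow> 'a \<Rightarrow> nat" where
  "sigma_via V E s t v = card {xs \<in> shortest_paths V E s t. v \<in> set (tl (butlast xs))}"

definition dependency :: "'a set \<Rightarrow> ('a \<Rightarrow> 'a \<Rightarrow> bool) \<Rightarrow> 'a \<Rightarrow> 'a \<Rightarrow> real" where
  "dependency V E s v = (if s = v then 0 else
      (\<Sum>t\<in>V - {v, s}. real (sigma_via V E s t v) / real (sigma V E s t)))"

definition avg_dependency :: "'a set \<Rightarrow> ('a \<Rightarrow> 'a \<Rightarrow> bool) \<Rightarrow> 'a \<Rightarrow> real" where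
  "avg_dependency V E r = (\<Sum>u\<in>V. dependency V E u r) / real (card V)"

end

theory Submission
  imports Defs
begin

text \<open>Every shortest path from a vertex u \<noteq> r to a vertex t in another component of G - r
  passes through r, so u depends on r at least as much as the number of vertices outside its
  own component of G - r; by hypothesis this is at least c |V|. Averaging, the mean dependency
  on r is at least c (|V| - 1), whereas a single dependency score never exceeds |V| - 1.
  Hence K = 1/c works.\<close>

lemma reach_refl: "s \<in> W \<Longrightarrow> reach W E s s"
  unfolding reach_def walk_in_def by (rule exI[of _ "[s]"]) auto

lemma reach_sym:
  assumes "\<forall>x y. E x y \<longrightarrow> E y x" and "reach W E s t"
  shows "reach W E t s"
proof -
  from assms(2) obtain xs where "walk_in W E xs s t" unfolding reach_def by blast
  hence "walk_in W E (rev xs) t s"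
    unfolding walk_in_def
    by (auto simp: hd_rev last_rev intro: successively_mono[where P = E] dest: assms(1)[rule_format])
  thus ?thesis unfolding reach_def by blast
qed

lemma reach_trans:
  assumes "reach W E s t" and "reach W E t u"
  shows "reach W E s u"
proof -
  from assms obtain xs ys where xs: "walk_in W E xs s t" and ys: "walk_in W E ys t u"
    unfolding reach_def by blast
  from ys obtain ys' where ys': "ys = t # ys'" unfolding walk_in_def by (cases ys) auto
  have "walk_in W E (xs @ ys') s u"
    using xs ys ys' unfolding walk_in_def by (auto simp: successively_append_iff successively_Cons)
  thus ?thesis unfolding reach_def by blast
qed

definition component :: "'a set \<Rightarrow> ('a \<Rightarrow> 'a \<Rightarrow> bool) \<Rightarrow> 'a \<Rightarrow> 'a set" where
  "component W E s = {t \<in> W. reach W E s t}"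

lemma comps_minus_eq_component_image:
  "comps_minus V E r = component (V - {r}) E ` (V - {r})"
  unfolding comps_minus_def component_def ..

lemma component_eq_if_common_vertex:
  assumes "\<forall>x y. E x y \<longrightarrow> E y x"
    and "t \<in> component W E s" and "t \<in> component W E u"
  shows "component W E s = component W E u"
proof -
  have st: "reach W E s t" and ut: "reach W E u t"
    using assms(2,3) unfolding component_def by auto
  have su: "reach W E s u"
    using reach_trans[OF st reach_sym[OF assms(1) ut]] .
  have us: "reach W E u s"
    using reach_sym[OF assms(1) su] .
  show ?thesis
    using reach_trans[OF su] reach_trans[OF us] unfolding component_def by blast
qed

lemma pairwise_disjnt_components:
  assumes "\<forall>x y. E x y \<longrightarrow> E y x"
  shows "pairwise disjnt (component W E ` W)"
proof (rule pairwiseI)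
  fix A B assume "A \<in> component W E ` W" "B \<in> component W E ` W" "A \<noteq> B"
  then obtain a b where A: "A = component W E a" and B: "B = component W E b" by blast
  show "disjnt A B"
    unfolding disjnt_def
  proof (rule equals0I)
    fix t assume "t \<in> A \<inter> B"
    hence "A = B"
      unfolding A B using component_eq_if_common_vertex[OF assms] by blast
    with \<open>A \<noteq> B\<close> show False ..
  qed
qed

lemma not_reach_if_in_other_component:
  assumes "\<forall>x y. E x y \<longrightarrow> E y x"
    and "t \<in> \<Union>(component W E ` W - {component W E u})"
  shows "\<not> reach W E u t"
proof
  assume "reach W E u t"
  from assms(2) obtain a where a: "a \<in> W" "t \<in> component W E a"
    and ne: "component W E a \<noteq> component W E u" by auto
  have "t \<in> component W E u"
    using a(2) \<open>reach W E u t\<close> unfolding component_def by blast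
  hence "component W E a = component W E u"
    by (rule component_eq_if_common_vertex[OF assms(1) a(2)])
  with ne show False ..
qed

lemma in_set_butlastI: "x \<in> set xs \<Longrightarrow> x \<noteq> last xs \<Longrightarrow> x \<in> set (butlast xs)"
  by (induction xs) auto

lemma in_set_tlI: "x \<in> set xs \<Longrightarrow> x \<noteq> hd xs \<Longrightarrow> x \<in> set (tl xs)"
  by (cases xs) auto

lemma in_set_tl_butlastI:
  assumes "x \<in> set xs" and "x \<noteq> hd xs" and "x \<noteq> last xs"
  shows "x \<in> set (tl (butlast xs))"
proof -
  have "x \<in> set (tl xs)" using assms(1,2) by (rule in_set_tlI)
  moreover have "last (tl xs) = last xs"
    using calculation by (cases xs) auto
  ultimately show ?thesis
    unfolding butlast_tl[symmetric] using assms(3) by (intro in_set_butlastI) auto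
qed

lemma finite_shortest_paths:
  assumes "finite V"
  shows "finite (shortest_paths V E s t)"
proof (cases "shortest_paths V E s t = {}")
  case False
  then obtain xs where xs: "xs \<in> shortest_paths V E s t" by blast
  have "shortest_paths V E s t \<subseteq> {ys. set ys \<subseteq> V \<and> length ys \<le> length xs}"
    using xs unfolding shortest_paths_def walk_in_def by auto
  thus ?thesis using finite_lists_length_le[OF assms] finite_subset by blast
qed simp

lemma shortest_paths_nonempty:
  assumes "reach V E s t"
  shows "shortest_paths V E s t \<noteq> {}"
proof -
  let ?P = "\<lambda>n. \<exists>xs. walk_in V E xs s t \<and> length xs = n"
  have "\<exists>n. ?P n" using assms unfolding reach_def by blast
  from LeastI_ex[OF this] obtain xs
    where walk: "walk_in V E xs s t" and len: "length xs = (LEAST n. ?P n)" by blast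
  have "length xs \<le> length ys" if "walk_in V E ys s t" for ys
    unfolding len using that by (auto intro: Least_le)
  hence "xs \<in> shortest_paths V E s t"
    using walk unfolding shortest_paths_def by blast
  thus ?thesis by blast
qed

lemma sigma_pos:
  assumes "finite V" and "reach V E s t"
  shows "sigma V E s t > 0"
  using finite_shortest_paths[OF assms(1)] shortest_paths_nonempty[OF assms(2)]
  unfolding sigma_def by (simp add: card_gt_0_iff)

lemma sigma_via_le_sigma:
  assumes "finite V"
  shows "sigma_via V E s t v \<le> sigma V E s t"
  unfolding sigma_via_def sigma_def
  by (rule card_mono[OF finite_shortest_paths[OF assms]]) auto

lemma sigma_via_eq_sigma_if_separating:
  assumes "s \<noteq> r" and "t \<noteq> r" and "\<not> reach (V - {r}) E s t"
  shows "sigma_via V E s t r = sigma V E s t"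
proof -
  have "r \<in> set (tl (butlast xs))" if "xs \<in> shortest_paths V E s t" for xs
  proof -
    have walk: "walk_in V E xs s t"
      using that unfolding shortest_paths_def by blast
    have "r \<in> set xs"
    proof (rule ccontr)
      assume "r \<notin> set xs"
      hence "walk_in (V - {r}) E xs s t"
        using walk unfolding walk_in_def by blast
      thus False using assms(3) unfolding reach_def by blast
    qed
    thus ?thesis
      using walk assms(1,2) unfolding walk_in_def by (intro in_set_tl_butlastI) auto
  qed
  hence "{xs \<in> shortest_paths V E s t. r \<in> set (tl (butlast xs))} = shortest_paths V E s t"
    by blast
  thus ?thesis unfolding sigma_via_def sigma_def by simp
qed

lemma dependency_nonneg: "0 \<le> dependency V E s v"
  unfolding dependency_def by (auto intro: sum_nonneg)

lemma dependency_le_card: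
  assumes "finite V" and "r \<in> V"
  shows "dependency V E v r \<le> real (card V) - 1"
proof -
  have "card V \<ge> 1"
    using assms by (auto simp: Suc_le_eq card_gt_0_iff)
  hence card_V: "real (card (V - {r})) = real (card V) - 1"
    using assms(2) by simp
  have "dependency V E v r \<le> (\<Sum>t\<in>V - {r, v}. 1)"
    unfolding dependency_def using sigma_via_le_sigma[OF assms(1)]
    by (auto simp del: sum_constant intro!: sum_mono sum_nonneg simp: divide_le_eq_1)
  also have "\<dots> = real (card (V - {r, v}))"
    by simp
  also have "\<dots> \<le> real (card (V - {r}))"
    using assms(1) by (intro of_nat_mono card_mono) auto
  finally show ?thesis unfolding card_V .
qed

lemma dependency_ge_card_separated:
  assumes "finite V" and "graph_connected V E" and "u \<in> V - {r}"
    and "U \<subseteq> V - {r, u}" and "\<forall>t\<in>U. \<not> reach (V - {r}) E u t"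
  shows "real (card U) \<le> dependency V E u r"
proof -
  have ratio_one: "real (sigma_via V E u t r) / real (sigma V E u t) = 1" if "t \<in> U" for t
  proof -
    have "reach V E u t"
      using assms(2-4) that unfolding graph_connected_def by blast
    hence "sigma V E u t > 0" using sigma_pos[OF assms(1)] by blast
    thus ?thesis
      using sigma_via_eq_sigma_if_separating assms(3-5) that by fastforce
  qed
  have "real (card U) = (\<Sum>t\<in>U. 1)"
    by simp
  also have "\<dots> = (\<Sum>t\<in>U. real (sigma_via V E u t r) / real (sigma V E u t))"
    by (rule sum.cong[OF refl]) (erule ratio_one[symmetric])
  also have "\<dots> \<le> (\<Sum>t\<in>V - {r, u}. real (sigma_via V E u t r) / real (sigma V E u t))"
    using assms(1,4) by (intro sum_mono2) auto
  also have "\<dots> = dependency V E u r"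
    using assms(3) unfolding dependency_def by (auto simp: insert_commute)
  finally show ?thesis .
qed

lemma dependency_ge_other_components:
  assumes "simple_graph V E" and "graph_connected V E" and "u \<in> V - {r}"
  shows "(\<Sum>C\<in>comps_minus V E r - {component (V - {r}) E u}. real (card C))
           \<le> dependency V E u r"
proof -
  let ?W = "V - {r}"
  let ?others = "comps_minus V E r - {component ?W E u}"
  have fin: "finite V" and sym: "\<forall>x y. E x y \<longrightarrow> E y x"
    using assms(1) unfolding simple_graph_def by blast+
  have comps: "comps_minus V E r = component ?W E ` ?W"
    by (rule comps_minus_eq_component_image)
  have others_sub: "\<Union>?others \<subseteq> ?W"
    by (auto simp: comps component_def)
  have "pairwise disjnt ?others"
    using pairwise_disjnt_components[OF sym, of ?W] by (rule pairwise_subset) (simp add: comps)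
  moreover have "finite C" if "C \<in> ?others" for C
    using that others_sub fin by (meson Union_upper finite_Diff finite_subset order_trans)
  ultimately have card_Union: "card (\<Union>?others) = (\<Sum>C\<in>?others. card C)"
    by (rule card_Union_disjoint)
  have separated: "\<forall>t\<in>\<Union>?others. \<not> reach ?W E u t"
    using not_reach_if_in_other_component[OF sym] by (simp add: comps)
  have "reach ?W E u u"
    using assms(3) by (rule reach_refl)
  hence "\<Union>?others \<subseteq> V - {r, u}"
    using separated others_sub by blast
  from dependency_ge_card_separated[OF fin assms(2,3) this separated]
  show ?thesis by (simp add: card_Union)
qed

lemma avg_dependency_ge:
  assumes "finite V" and "r \<in> V" and "\<forall>u\<in>V - {r}. b * real (card V) \<le> dependency V E u r"
  shows "(real (card V) - 1) * b \<le> avg_dependency V E r"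
proof -
  have "card V \<ge> 1"
    using assms(1,2) by (auto simp: Suc_le_eq card_gt_0_iff)
  hence card_pos: "real (card V) > 0"
    by simp
  have "(real (card V) - 1) * b * real (card V) = (\<Sum>u\<in>V - {r}. b * real (card V))"
    using assms(2) \<open>card V \<ge> 1\<close> by simp
  also have "\<dots> \<le> (\<Sum>u\<in>V - {r}. dependency V E u r)"
    using assms(3) by (intro sum_mono) blast
  also have "\<dots> \<le> (\<Sum>u\<in>V. dependency V E u r)"
    using assms(1) dependency_nonneg by (intro sum_mono2) auto
  finally show ?thesis
    unfolding avg_dependency_def using card_pos by (simp add: pos_le_divide_eq)
qed

theorem theorem2:
  fixes c :: real
  assumes "c > 0"
  shows "\<exists>K::real. \<forall>(V::'a set) E r.
     simple_graph V E \<longrightarrow> graph_connected V E \<longrightarrow> r \<in> V \<longrightarrow>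
     (\<forall>C\<in>comps_minus V E r.
        (\<Sum>C'\<in>comps_minus V E r - {C}. real (card C')) \<ge> c * real (card V)) \<longrightarrow>
     (\<forall>v\<in>V. dependency V E v r \<le> K * avg_dependency V E r)"
proof (intro exI[of _ "1 / c"] allI impI ballI)
  fix V :: "'a set" and E r v
  assume graph: "simple_graph V E" and conn: "graph_connected V E" and "r \<in> V"
    and balanced: "\<forall>C\<in>comps_minus V E r.
        (\<Sum>C'\<in>comps_minus V E r - {C}. real (card C')) \<ge> c * real (card V)"
  have fin: "finite V" using graph unfolding simple_graph_def by blast
  have "\<forall>u\<in>V - {r}. c * real (card V) \<le> dependency V E u r"
  proof
    fix u assume u: "u \<in> V - {r}"
    hence "component (V - {r}) E u \<in> comps_minus V E r"
      by (simp add: comps_minus_eq_component_image)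
    with balanced dependency_ge_other_components[OF graph conn u]
    show "c * real (card V) \<le> dependency V E u r" by fastforce
  qed
  from avg_dependency_ge[OF fin \<open>r \<in> V\<close> this]
  have "real (card V) - 1 \<le> 1 / c * avg_dependency V E r"
    using assms by (simp add: field_simps)
  with dependency_le_card[OF fin \<open>r \<in> V\<close>, of E v]
  show "dependency V E v r \<le> 1 / c * avg_dependency V E r" by linarith
qed

end
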